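(* Let $\mathcal G=(\mathcal V,\mathcal E,W)$ be a network, $h\in\mathbb{R}^{\mathcal V}$, and consider the SNC game with binary actions on $\mathcal G$ with external field $h$. Then: (i) the game is an exact potential game if and only if $\mathcal G$ is undirected. Moreover, if $\mathcal G$ is undirected, then: (ii) a function $\Phi:\mathcal X\to\mathbb{R}$ is an exact potential function for the game if and only if there exists a constant $C\in\mathbb{R}$ such that $\Phi(x)=\frac12\sum_{i,j\in\mathcal V}W_{ij}x_ix_j+\sum_{i\in\mathcal V}h_ix_i+C$ for all $x\in\mathcal X$; (iii) there exists a globally BR-stable set $\overline{\mathcal N}$ with $\arg\max_{x\in\mathcal X}\Phi(x)\subseteq\overline{\mathcal N}\subseteq\mathcal N$, where $\Phi(x)=\frac12\sum_{i,j}W_{ij}x_ix_j+\sum_ih_ix_i$ and $\mathcal N$ is the set of Nash equilibria.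
   Context: A network is a triple $\mathcal G=(\mathcal V,\mathcal E,W)$ where $\mathcal V$ is a finite nonempty set, $\mathcal E\subseteq\mathcal V\times\mathcal V$, and $W\in\mathbb{R}^{\mathcal V\times\mathcal V}$ has zero diagonal and satisfies $W_{ij}\neq0$ iff $(i,j)\in\mathcal E$ (weights may have either sign). It is undirected if $W=W^T$. The SNC game with binary actions on $\mathcal G$ with external field $h\in\mathbb{R}^{\mathcal V}$ has player set $\mathcal V$, action set $\{-1,+1\}$ for each player, strategy profiles $\mathcal X=\{\pm1\}^{\mathcal V}$, and utilities $u_i(x)=h_ix_i+x_i\sum_{j\in\mathcal V}W_{ij}x_j$. Best responses $\mathcal B_i(x_{-i})=\arg\max_{x_i\in\{\pm1\}}u_i(x_i,x_{-i})$; Nash equilibrium: $x^*_i\in\mathcal B_i(x^*_{-i})$ for all $i$. The game is exact potential with potential $\Phi:\mathcal X\to\mathbb{R}$ if $u_i(y)-u_i(x)=\Phi(y)-\Phi(x)$ whenever $x_{-i}=y_{-i}$. A BR-path of length $l\ge0$ from $x$ to $y$ is a sequence $x^{(0)}=x,\dots,x^{(l)}=y$ such that for each $k$ some player $i_k$ has $x^{(k)}_{-i_k}=x^{(k-1)}_{-i_k}$ and $x^{(k)}_{i_k}\in\mathcal B_{i_k}(x^{(k-1)}_{-i_k})\setminus\{x^{(k-1)}_{i_k}\}$. A set $\mathcal X^*\subseteq\mathcal X$ is globally BR-reachable if from every profile there is a BR-path to some element of $\mathcal X^*$; BR-invariant if there is no BR-path from an element of $\mathcal X^*$ to an element outside;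 globally BR-stable if both. *)

theory Defs
  imports Complex_Main
begin

text \<open>The vertex set is the (finite, nonempty) universe of a type 'v :: finite.
  Weights W :: 'v => 'v => real; edges E :: ('v * 'v) set.\<close>

definition network :: "('v \<times> 'v) set \<Rightarrow> ('v \<Rightarrow> 'v \<Rightarrow> real) \<Rightarrow> bool" where
  "network E W \<longleftrightarrow> (\<forall>i. W i i = 0) \<and> (\<forall>i j. W i j \<noteq> 0 \<longleftrightarrow> (i, j) \<in> E)"

definition undirected :: "('v \<Rightarrow> 'v \<Rightarrow> real) \<Rightarrow> bool" where
  "undirected W \<longleftrightarrow> (\<forall>i j. W i j = W j i)"

definition profiles :: "('v \<Rightarrow> real) set" where
  "profiles = {x. \<forall>i. x i \<in> {-1, 1}}"

definition util :: "('v::finite \<Rightarrow> 'v \<Rightarrow> real) \<Rightarrow> ('v \<Rightarrow> real) \<Rightarrow> 'v \<Rightarrow> ('v \<Rightarrow> real) \<Rightarrow> real" where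
  "util W h i x = h i * x i + x i * (\<Sum>j\<in>UNIV. W i j * x j)"

definition best_resp :: "('v::finite \<Rightarrow> 'v \<Rightarrow> real) \<Rightarrow> ('v \<Rightarrow> real) \<Rightarrow> 'v \<Rightarrow> ('v \<Rightarrow> real) \<Rightarrow> real set" where
  "best_resp W h i x = {a \<in> {-1, 1}. \<forall>b \<in> {-1, 1}. util W h i (x(i := b)) \<le> util W h i (x(i := a))}"

definition nash :: "('v::finite \<Rightarrow> 'v \<Rightarrow> real) \<Rightarrow> ('v \<Rightarrow> real) \<Rightarrow> ('v \<Rightarrow> real) set" where
  "nash W h = {x \<in> profiles. \<forall>i. x i \<in> best_resp W h i x}"

definition exact_potential :: "('v::finite \<Rightarrow> 'v \<Rightarrow> real) \<Rightarrow> ('v \<Rightarrow> real) \<Rightarrow> (('v \<Rightarrow> real) \<Rightarrow> real) \<Rightarrow> bool" where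
  "exact_potential W h \<Phi> \<longleftrightarrow>
     (\<forall>x \<in> profiles. \<forall>y \<in> profiles. \<forall>i. (\<forall>j. j \<noteq> i \<longrightarrow> x j = y j) \<longrightarrow>
        util W h i y - util W h i x = \<Phi> y - \<Phi> x)"

definition exact_potential_game :: "('v::finite \<Rightarrow> 'v \<Rightarrow> real) \<Rightarrow> ('v \<Rightarrow> real) \<Rightarrow> bool" where
  "exact_potential_game W h \<longleftrightarrow> (\<exists>\<Phi>. exact_potential W h \<Phi>)"

definition br_step :: "('v::finite \<Rightarrow> 'v \<Rightarrow> real) \<Rightarrow> ('v \<Rightarrow> real) \<Rightarrow> ('v \<Rightarrow> real) \<Rightarrow> ('v \<Rightarrow> real) \<Rightarrow> bool" where
  "br_step W h x y \<longleftrightarrow>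
     (\<exists>i. (\<forall>j. j \<noteq> i \<longrightarrow> y j = x j) \<and> y i \<in> best_resp W h i x \<and> y i \<noteq> x i)"

definition br_path :: "('v::finite \<Rightarrow> 'v \<Rightarrow> real) \<Rightarrow> ('v \<Rightarrow> real) \<Rightarrow> ('v \<Rightarrow> real) \<Rightarrow> ('v \<Rightarrow> real) \<Rightarrow> bool" where
  "br_path W h = (br_step W h)\<^sup>*\<^sup>*"

definition globally_BR_reachable :: "('v::finite \<Rightarrow> 'v \<Rightarrow> real) \<Rightarrow> ('v \<Rightarrow> real) \<Rightarrow> ('v \<Rightarrow> real) set \<Rightarrow> bool" where
  "globally_BR_reachable W h S \<longleftrightarrow> (\<forall>x \<in> profiles. \<exists>y \<in> S. br_path W h x y)"

definition BR_invariant :: "('v::finite \<Rightarrow> 'v \<Rightarrow> real) \<Rightarrow> ('v \<Rightarrow> real) \<Rightarrow> ('v \<Rightarrow> real) set \<Rightarrow> bool" where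
  "BR_invariant W h S \<longleftrightarrow> (\<forall>x \<in> S. \<forall>y. br_path W h x y \<longrightarrow> y \<in> S)"

definition globally_BR_stable :: "('v::finite \<Rightarrow> 'v \<Rightarrow> real) \<Rightarrow> ('v \<Rightarrow> real) \<Rightarrow> ('v \<Rightarrow> real) set \<Rightarrow> bool" where
  "globally_BR_stable W h S \<longleftrightarrow> S \<subseteq> profiles \<and> globally_BR_reachable W h S \<and> BR_invariant W h S"

definition std_potential :: "('v::finite \<Rightarrow> 'v \<Rightarrow> real) \<Rightarrow> ('v \<Rightarrow> real) \<Rightarrow> ('v \<Rightarrow> real) \<Rightarrow> real" where
  "std_potential W h x = (1/2) * (\<Sum>i\<in>UNIV. \<Sum>j\<in>UNIV. W i j * x i * x j) + (\<Sum>i\<in>UNIV. h i * x i)"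

definition argmax_on :: "(('v \<Rightarrow> real) \<Rightarrow> real) \<Rightarrow> ('v \<Rightarrow> real) set" where
  "argmax_on \<Phi> = {x \<in> profiles. \<forall>y \<in> profiles. \<Phi> y \<le> \<Phi> x}"

end

theory Submission
  imports Defs
begin

text \<open>
  Since W i i = 0, the utility of player i is x i times the local field
  h i + (\<Sum>k. W i k * x k), which does not depend on x i, and a deviation of i from x i to c
  changes the quadratic form of std_potential by (c - x i) * (\<Sum>k. (W i k + W k i) * x k).
  Hence std_potential is an exact potential when W is symmetric. Conversely, the potential
  differences around the square of profiles obtained by flipping x i and x j cancel, and
  evaluating them through the utilities gives 4 W i j = 4 W j i. Two exact potentials differ by
  a function invariant under unilateral deviations, hence by a constant on profiles.
  Best-response steps never decrease an exact potential, and a profile that is not a Nash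
  equilibrium has a strictly improving one. So every profile maximising the potential among its
  best-response successors lies in nash_absorbing, the set of profiles all of whose successors
  are Nash equilibria; this set is therefore reachable from every profile and contains the
  global maximisers.
\<close>

lemma sum_fun_upd:
  fixes f :: "'v::finite \<Rightarrow> 'b \<Rightarrow> 'c::ab_group_add"
  shows "(\<Sum>k\<in>UNIV. f k ((x(m := c)) k)) = (\<Sum>k\<in>UNIV. f k (x k)) + (f m c - f m (x m))"
proof -
  have "(\<Sum>k\<in>UNIV. f k ((x(m := c)) k))
      = (\<Sum>k\<in>UNIV. f k (x k) + (if k = m then f m c - f m (x m) else 0))"
    by (rule sum.cong) auto
  then show ?thesis
    by (simp add: sum.distrib)
qed

lemma quadratic_form_fun_upd:
  fixes W :: "'v::finite \<Rightarrow> 'v \<Rightarrow> real"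
  shows "(\<Sum>i\<in>UNIV. \<Sum>j\<in>UNIV. W i j * (x(m := c)) i * (x(m := c)) j)
       = (\<Sum>i\<in>UNIV. \<Sum>j\<in>UNIV. W i j * x i * x j)
         + (c - x m) * (\<Sum>k\<in>UNIV. (W m k + W k m) * x k) + W m m * (c - x m)\<^sup>2"
proof -
  define d where "d = c - x m"
  have upd: "x(m := c) = (\<lambda>k. x k + (if k = m then d else 0))"
    by (auto simp: d_def)
  have sum_if: "(\<Sum>j\<in>UNIV. if P then f j else 0) = (if P then sum f UNIV else (0::real))"
    for P and f :: "'v \<Rightarrow> real"
    by simp
  show ?thesis
    unfolding upd d_def[symmetric]
    by (simp add: algebra_simps sum.distrib sum_distrib_left power2_eq_square sum_if
        if_distrib[of "times _"] cong: if_cong)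
qed

lemma exact_potential_fun_upd:
  assumes "exact_potential W h \<Phi>" and "x \<in> profiles" and "x(i := a) \<in> profiles"
  shows "util W h i (x(i := a)) - util W h i x = \<Phi> (x(i := a)) - \<Phi> x"
  using assms unfolding exact_potential_def by simp

lemma util_fun_upd_other:
  assumes "j \<noteq> i"
  shows "util W h i (x(j := b)) = util W h i x + W i j * x i * (b - x j)"
proof -
  have "(\<Sum>k\<in>UNIV. W i k * (x(j := b)) k) = (\<Sum>k\<in>UNIV. W i k * x k) + W i j * (b - x j)"
    using sum_fun_upd[of "\<lambda>k v. W i k * v" x j b] by (simp add: algebra_simps)
  moreover have "(x(j := b)) i = x i"
    using assms by simp
  ultimately show ?thesis
    unfolding util_def by (simp only:) (simp add: algebra_simps)
qed

lemma util_fun_upd_self: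
  assumes "W i i = 0"
  shows "util W h i (x(i := a)) - util W h i x = (a - x i) * (h i + (\<Sum>k\<in>UNIV. W i k * x k))"
proof -
  have "(\<Sum>k\<in>UNIV. W i k * (x(i := a)) k) = (\<Sum>k\<in>UNIV. W i k * x k)"
    using sum_fun_upd[of "\<lambda>k v. W i k * v" x i a] assms by simp
  then show ?thesis
    unfolding util_def by (simp add: algebra_simps)
qed

lemma std_potential_fun_upd:
  assumes "W m m = 0" and "undirected W"
  shows "std_potential W h (x(m := c)) - std_potential W h x
       = (c - x m) * (h m + (\<Sum>k\<in>UNIV. W m k * x k))"
proof -
  have "W k m = W m k" for k
    using \<open>undirected W\<close> by (simp add: undirected_def)
  then have "(\<Sum>k\<in>UNIV. (W m k + W k m) * x k) = 2 * (\<Sum>k\<in>UNIV. W m k * x k)"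
    by (simp add: sum_distrib_left algebra_simps)
  moreover have "(\<Sum>i\<in>UNIV. h i * (x(m := c)) i) = (\<Sum>i\<in>UNIV. h i * x i) + h m * (c - x m)"
    using sum_fun_upd[of "\<lambda>k v. h k * v" x m c] by (simp add: algebra_simps)
  ultimately show ?thesis
    unfolding std_potential_def quadratic_form_fun_upd[of W x m c]
    using \<open>W m m = 0\<close> by (simp add: algebra_simps)
qed

lemma exact_potential_std_potential:
  fixes W :: "'v::finite \<Rightarrow> 'v \<Rightarrow> real"
  assumes "\<And>i. W i i = 0" and "undirected W"
  shows "exact_potential W h (std_potential W h)"
  unfolding exact_potential_def
proof (intro ballI allI impI)
  fix x y :: "'v \<Rightarrow> real" and i
  assume "\<forall>j. j \<noteq> i \<longrightarrow> x j = y j"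
  then have "y = x(i := y i)"
    by auto
  then show "util W h i y - util W h i x = std_potential W h y - std_potential W h x"
    using util_fun_upd_self[where W = W and i = i and h = h and x = x and a = "y i", OF assms(1)]
      std_potential_fun_upd[where W = W and m = i and h = h and x = x and c = "y i", OF assms]
    by simp
qed

lemma exact_potential_symmetric:
  fixes W :: "'v::finite \<Rightarrow> 'v \<Rightarrow> real"
  assumes "exact_potential W h \<Phi>"
  shows "W i j = W j i"
proof (cases "i = j")
  case False
  define p :: "real \<Rightarrow> real \<Rightarrow> 'v \<Rightarrow> real" where "p a b = (\<lambda>_. 1)(i := a, j := b)" for a b
  have p_profiles: "p a b \<in> profiles" if "a \<in> {-1, 1}" "b \<in> {-1, 1}" for a b
    using that by (auto simp: p_def profiles_def)
  have flip_i: "p 1 b = (p (-1) b)(i := 1)" and flip_j: "p a 1 = (p a (-1))(j := 1)" for a b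
    using False by (auto simp: p_def)
  have p_at: "p a b i = a" "p a b j = b" for a b
    using False by (simp_all add: p_def)
  have dev_i: "util W h i (p 1 b) - util W h i (p (-1) b) = \<Phi> (p 1 b) - \<Phi> (p (-1) b)"
    if "b \<in> {-1, 1}" for b
    unfolding flip_i by (rule exact_potential_fun_upd[OF assms]) (simp_all add: p_profiles[OF _ that] flip_i[symmetric])
  have dev_j: "util W h j (p a 1) - util W h j (p a (-1)) = \<Phi> (p a 1) - \<Phi> (p a (-1))"
    if "a \<in> {-1, 1}" for a
    unfolding flip_j by (rule exact_potential_fun_upd[OF assms]) (simp_all add: p_profiles[OF that] flip_j[symmetric])
  have slope_i: "util W h i (p a 1) - util W h i (p a (-1)) = 2 * a * W i j" for a
    unfolding flip_j util_fun_upd_other[OF False[symmetric]] using p_at by simp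
  have slope_j: "util W h j (p 1 b) - util W h j (p (-1) b) = 2 * b * W j i" for b
    unfolding flip_i util_fun_upd_other[OF False] using p_at by simp
  show ?thesis
    using dev_i[of 1] dev_i[of "-1"] dev_j[of 1] dev_j[of "-1"]
      slope_i[of 1] slope_i[of "-1"] slope_j[of 1] slope_j[of "-1"]
    by simp
qed simp

lemma exact_potential_game_iff_undirected:
  fixes W :: "'v::finite \<Rightarrow> 'v \<Rightarrow> real"
  assumes "\<And>i. W i i = 0"
  shows "exact_potential_game W h \<longleftrightarrow> undirected W"
proof
  assume "exact_potential_game W h"
  then obtain \<Phi> where "exact_potential W h \<Phi>"
    unfolding exact_potential_game_def by blast
  then show "undirected W"
    unfolding undirected_def using exact_potential_symmetric by blast
next
  assume "undirected W"
  then show "exact_potential_game W h"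
    unfolding exact_potential_game_def using exact_potential_std_potential[of W, OF assms] by blast
qed

lemma unilateral_invariant_const_on_profiles:
  fixes D :: "('v::finite \<Rightarrow> real) \<Rightarrow> 'a"
  assumes inv: "\<And>x i a. x \<in> profiles \<Longrightarrow> a \<in> {-1, 1} \<Longrightarrow> D (x(i := a)) = D x"
    and x: "x \<in> profiles" and y: "y \<in> profiles"
  shows "D y = D x"
proof -
  have "(\<lambda>k. if k \<in> S then y k else x k) \<in> profiles \<and> D (\<lambda>k. if k \<in> S then y k else x k) = D x"
    for S :: "'v set"
    using finite[of S]
  proof (induction S rule: finite_induct)
    case empty
    then show ?case
      using x by simp
  next
    case (insert a S)
    have "(\<lambda>k. if k \<in> insert a S then y k else x k) = (\<lambda>k. if k \<in> S then y k else x k)(a := y a)"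
      by auto
    moreover have "y a \<in> {-1, 1}"
      using y by (simp add: profiles_def)
    ultimately show ?case
      using insert.IH inv by (auto simp: profiles_def)
  qed
  from this[of UNIV] show ?thesis
    by simp
qed

lemma exact_potential_unique:
  assumes "exact_potential W h \<Phi>" and "exact_potential W h \<Psi>"
  shows "\<exists>C. \<forall>x \<in> profiles. \<Phi> x = \<Psi> x + C"
proof -
  define x0 :: "'a \<Rightarrow> real" where "x0 = (\<lambda>_. 1)"
  have x0: "x0 \<in> profiles"
    by (simp add: x0_def profiles_def)
  have "\<Phi> (x(i := a)) - \<Psi> (x(i := a)) = \<Phi> x - \<Psi> x"
    if "x \<in> profiles" "a \<in> {-1, 1}" for x i a
  proof -
    have "x(i := a) \<in> profiles"
      using that by (simp add: profiles_def)
    then show ?thesis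
      using exact_potential_fun_upd[OF assms(1) that(1)] exact_potential_fun_upd[OF assms(2) that(1)]
      by (simp add: algebra_simps)
  qed
  then have "\<Phi> x - \<Psi> x = \<Phi> x0 - \<Psi> x0" if "x \<in> profiles" for x
    using unilateral_invariant_const_on_profiles[where D = "\<lambda>x. \<Phi> x - \<Psi> x"] x0 that by blast
  then show ?thesis
    by (intro exI[of _ "\<Phi> x0 - \<Psi> x0"] ballI) (simp add: algebra_simps)
qed

lemma exact_potential_iff_std_potential_plus_const:
  assumes "\<And>i. W i i = 0" and "undirected W"
  shows "exact_potential W h \<Phi> \<longleftrightarrow> (\<exists>C. \<forall>x \<in> profiles. \<Phi> x = std_potential W h x + C)"
  using exact_potential_unique[OF _ exact_potential_std_potential[OF assms]]
    exact_potential_std_potential[OF assms]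
  unfolding exact_potential_def by auto

lemma finite_profiles: "finite (profiles :: ('v::finite \<Rightarrow> real) set)"
  using finite_set_of_finite_funs[of "UNIV :: 'v set" "{-1, 1 :: real}" 0]
  by (simp add: profiles_def)

lemma br_step_fun_upd:
  assumes "br_step W h x y"
  obtains i a where "y = x(i := a)" and "a \<in> best_resp W h i x"
proof -
  obtain i where "\<forall>j. j \<noteq> i \<longrightarrow> y j = x j" and "y i \<in> best_resp W h i x"
    using assms unfolding br_step_def by blast
  moreover from this(1) have "y = x(i := y i)"
    by auto
  ultimately show ?thesis
    using that by blast
qed

lemma br_step_profiles:
  assumes "br_step W h x y" and "x \<in> profiles"
  shows "y \<in> profiles"
proof -
  obtain i a where y: "y = x(i := a)" and "a \<in> best_resp W h i x"
    using assms(1) by (rule br_step_fun_upd)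
  then have "a \<in> {-1, 1}"
    by (simp add: best_resp_def)
  then show ?thesis
    using assms(2) unfolding y profiles_def by simp
qed

lemma br_step_potential_mono:
  assumes "exact_potential W h \<Phi>" and "br_step W h x y" and "x \<in> profiles"
  shows "\<Phi> x \<le> \<Phi> y"
proof -
  obtain i a where y: "y = x(i := a)" and br: "a \<in> best_resp W h i x"
    using assms(2) by (rule br_step_fun_upd)
  have "x i \<in> {-1, 1}"
    using assms(3) by (simp add: profiles_def)
  then have "util W h i (x(i := x i)) \<le> util W h i y"
    using br unfolding best_resp_def y by blast
  moreover have "util W h i y - util W h i x = \<Phi> y - \<Phi> x"
    using exact_potential_fun_upd[OF assms(1,3)] br_step_profiles[OF assms(2,3)] unfolding y by simp
  ultimately show ?thesis
    by simp
qed

lemma br_path_profiles: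
  assumes "br_path W h x y" and "x \<in> profiles"
  shows "y \<in> profiles"
  using assms(1)[unfolded br_path_def] by induction (use assms(2) br_step_profiles in auto)

lemma br_path_potential_mono:
  assumes "exact_potential W h \<Phi>" and "br_path W h x y" and "x \<in> profiles"
  shows "\<Phi> x \<le> \<Phi> y"
  using assms(2)[unfolded br_path_def]
proof induction
  case (step y z)
  then have "y \<in> profiles"
    using br_path_profiles[OF _ assms(3)] by (simp add: br_path_def)
  then show ?case
    using br_step_potential_mono[OF assms(1) step(2)] step(3) by simp
qed simp

lemma not_nash_imp_improving_br_step:
  assumes "exact_potential W h \<Phi>" and "x \<in> profiles" and "x \<notin> nash W h"
  shows "\<exists>y. br_step W h x y \<and> \<Phi> x < \<Phi> y"
proof -
  obtain i where "x i \<notin> best_resp W h i x"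
    using assms(2,3) unfolding nash_def by blast
  moreover have xi: "x i \<in> {-1, 1}"
    using assms(2) by (simp add: profiles_def)
  ultimately have "\<not> (\<forall>b \<in> {-1, 1}. util W h i (x(i := b)) \<le> util W h i (x(i := x i)))"
    unfolding best_resp_def by blast
  then obtain b where b: "b \<in> {-1, 1}" and gain: "util W h i x < util W h i (x(i := b))"
    by (auto simp: not_le)
  then have "b \<noteq> x i"
    by (metis fun_upd_triv less_irrefl)
  have "util W h i (x(i := c)) \<le> util W h i (x(i := b))" if "c \<in> {-1, 1}" for c
  proof -
    have "c = b \<or> c = x i"
      using that b xi \<open>b \<noteq> x i\<close> by auto
    then show ?thesis
      using gain by auto
  qed
  then have "b \<in> best_resp W h i x"
    using b unfolding best_resp_def by blast
  then have "br_step W h x (x(i := b))"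
    using \<open>b \<noteq> x i\<close> unfolding br_step_def by auto
  moreover have "x(i := b) \<in> profiles"
    using assms(2) b by (simp add: profiles_def)
  ultimately show ?thesis
    using exact_potential_fun_upd[OF assms(1,2), of i b] gain by auto
qed

definition nash_absorbing :: "('v::finite \<Rightarrow> 'v \<Rightarrow> real) \<Rightarrow> ('v \<Rightarrow> real) \<Rightarrow> ('v \<Rightarrow> real) set" where
  "nash_absorbing W h = {x. \<forall>y. br_path W h x y \<longrightarrow> y \<in> nash W h}"

lemma nash_absorbing_subset_nash: "nash_absorbing W h \<subseteq> nash W h"
  unfolding nash_absorbing_def br_path_def by auto

lemma BR_invariant_nash_absorbing: "BR_invariant W h (nash_absorbing W h)"
  unfolding BR_invariant_def nash_absorbing_def br_path_def by (auto intro: rtranclp_trans)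

lemma br_path_potential_maximiser_in_nash_absorbing:
  assumes "exact_potential W h \<Phi>" and "z \<in> profiles"
    and max: "\<And>y. br_path W h z y \<Longrightarrow> \<Phi> y \<le> \<Phi> z"
  shows "z \<in> nash_absorbing W h"
  unfolding nash_absorbing_def
proof (intro CollectI allI impI)
  fix y
  assume zy: "br_path W h z y"
  show "y \<in> nash W h"
  proof (rule ccontr)
    assume "y \<notin> nash W h"
    then obtain w where yw: "br_step W h y w" and "\<Phi> y < \<Phi> w"
      using not_nash_imp_improving_br_step[OF assms(1) br_path_profiles[OF zy assms(2)]] by blast
    moreover have "br_path W h z w"
      using zy yw unfolding br_path_def by simp
    ultimately show False
      using max br_path_potential_mono[OF assms(1) zy assms(2)] by fastforce
  qed
qed

lemma argmax_on_subset_nash_absorbing: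
  assumes "exact_potential W h \<Phi>"
  shows "argmax_on \<Phi> \<subseteq> nash_absorbing W h"
  using br_path_potential_maximiser_in_nash_absorbing[OF assms] br_path_profiles
  unfolding argmax_on_def by blast

lemma globally_BR_reachable_nash_absorbing:
  assumes "exact_potential W h \<Phi>"
  shows "globally_BR_reachable W h (nash_absorbing W h)"
  unfolding globally_BR_reachable_def
proof
  fix x :: "'a \<Rightarrow> real"
  assume x: "x \<in> profiles"
  define R where "R = {z. br_path W h x z}"
  have "R \<subseteq> profiles"
    using br_path_profiles[OF _ x] by (auto simp: R_def)
  then have "finite R"
    using finite_profiles by (rule finite_subset)
  have "x \<in> R"
    by (simp add: R_def br_path_def)
  then have "Max (\<Phi> ` R) \<in> \<Phi> ` R"
    using \<open>finite R\<close> by (intro Max_in) auto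
  then obtain z where z_max: "Max (\<Phi> ` R) = \<Phi> z" and z: "z \<in> R"
    by (rule imageE)
  have "\<Phi> y \<le> \<Phi> z" if "br_path W h z y" for y
  proof -
    have "y \<in> R"
      using z that unfolding R_def br_path_def by simp
    then show ?thesis
      unfolding z_max[symmetric] using \<open>finite R\<close> by (intro Max_ge) auto
  qed
  then have "z \<in> nash_absorbing W h"
    using br_path_potential_maximiser_in_nash_absorbing[OF assms] z \<open>R \<subseteq> profiles\<close> by blast
  then show "\<exists>z \<in> nash_absorbing W h. br_path W h x z"
    using z by (auto simp: R_def)
qed

lemma globally_BR_stable_nash_absorbing:
  assumes "exact_potential W h \<Phi>"
  shows "globally_BR_stable W h (nash_absorbing W h)"
  using nash_absorbing_subset_nash BR_invariant_nash_absorbing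
    globally_BR_reachable_nash_absorbing[OF assms]
  unfolding globally_BR_stable_def nash_def by blast

lemma ex_globally_BR_stable_nash_subset:
  assumes "exact_potential W h \<Phi>"
  shows "\<exists>N. globally_BR_stable W h N \<and> argmax_on \<Phi> \<subseteq> N \<and> N \<subseteq> nash W h"
  using globally_BR_stable_nash_absorbing[OF assms] argmax_on_subset_nash_absorbing[OF assms]
    nash_absorbing_subset_nash
  by blast

theorem proposition1:
  fixes E :: "('v::finite \<times> 'v) set" and W :: "'v \<Rightarrow> 'v \<Rightarrow> real" and h :: "'v \<Rightarrow> real"
  assumes "network E W"
  shows "(exact_potential_game W h \<longleftrightarrow> undirected W) \<and>
         (undirected W \<longrightarrow>
            (\<forall>\<Phi>. exact_potential W h \<Phi> \<longleftrightarrow>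
                  (\<exists>C::real. \<forall>x \<in> profiles. \<Phi> x = std_potential W h x + C)) \<and>
            (\<exists>N. globally_BR_stable W h N \<and>
                 argmax_on (std_potential W h) \<subseteq> N \<and> N \<subseteq> nash W h))"
proof -
  have diag: "\<And>i. W i i = 0"
    using assms by (simp add: network_def)
  have "exact_potential_game W h \<longleftrightarrow> undirected W"
    by (rule exact_potential_game_iff_undirected[of W, OF diag])
  moreover have "(\<forall>\<Phi>. exact_potential W h \<Phi> \<longleftrightarrow>
                  (\<exists>C::real. \<forall>x \<in> profiles. \<Phi> x = std_potential W h x + C)) \<and>
            (\<exists>N. globally_BR_stable W h N \<and>
                 argmax_on (std_potential W h) \<subseteq> N \<and> N \<subseteq> nash W h)"
    if "undirected W"
  proof
    show "\<forall>\<Phi>. exact_potential W h \<Phi> \<longleftrightarrow> (\<exists>C. \<forall>x \<in> profiles. \<Phi> x = std_potential W h x + C)"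
      using exact_potential_iff_std_potential_plus_const[of W, OF diag that] by (rule allI)
    show "\<exists>N. globally_BR_stable W h N \<and> argmax_on (std_potential W h) \<subseteq> N \<and> N \<subseteq> nash W h"
      using exact_potential_std_potential[of W, OF diag that] by (rule ex_globally_BR_stable_nash_subset)
  qed
  ultimately show ?thesis
    by blast
qed

end
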